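(* Let $m\ge 1$, $p\ge 2m+3$, and let $\Sigma=(\sigma_{ij})\in\mathbb{R}^{p\times p}$ be positive definite such that every $(p-1)\times(p-1)$ principal submatrix of $\Sigma$ lies in $F_{p-1,m}$. Write $\Sigma_{\setminus p,\setminus p}=\Delta+\Gamma\Gamma^t$ and $\Sigma_{\setminus 1,\setminus 1}=D+GG^t$ with $\Delta, D$ positive definite diagonal $(p-1)\times(p-1)$ matrices and $\Gamma,G\in\mathbb{R}^{(p-1)\times m}$, where the rows of $\Delta,\Gamma$ are indexed by $1,\dots,p-1$ and the rows of $D,G$ are indexed by $2,\dots,p$ (matching the rows of $\Sigma$). Suppose: (i) $\Gamma_{\setminus 1}=G_{\setminus p}$, i.e. the rows of $\Gamma$ and $G$ indexed by $2,\dots,p-1$ coincide; and (ii) there are disjoint subsets $B,C\subseteq\{2,\dots,p-1\}$ with $|B|=|C|=m$ such that $\det(\Sigma_{B,C})\neq 0$. Then $\Sigma\in F_{p,m}$.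
   Context: For integers $p\ge 1$, $m\ge 1$, $F_{p,m}=\{\Delta+\Gamma\Gamma^t : \Delta \text{ a positive definite diagonal } p\times p \text{ matrix},\ \Gamma\in\mathbb{R}^{p\times m}\}$. For a matrix $\Lambda$ with row index set $I$ and column index set $J$ and $A\subseteq I$, $B\subseteq J$: $\Lambda_{A,B}$ is the submatrix with rows in $A$ and columns in $B$; $\Lambda_A=\Lambda_{A,J}$; $\Lambda_{\setminus A,\setminus B}=\Lambda_{I\setminus A,J\setminus B}$; $\setminus i$ means $\setminus\{i\}$, so $\Lambda_{\setminus i}$ is $\Lambda$ with row $i$ removed and $\Sigma_{\setminus i,\setminus i}$ is $\Sigma$ with row and column $i$ removed. *)

theory Defs
  imports Main "Jordan_Normal_Form.Determinant"
begin

(* Matrices are functions nat => nat => real, considered on an explicit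
   finite index set of rows/columns (a subset of {1..p}).  Factor loadings
   have columns indexed by {..<m}. *)

definition pos_def_on :: "nat set \<Rightarrow> (nat \<Rightarrow> nat \<Rightarrow> real) \<Rightarrow> bool" where
  "pos_def_on I S \<longleftrightarrow>
     (\<forall>i\<in>I. \<forall>j\<in>I. S i j = S j i) \<and>
     (\<forall>x :: nat \<Rightarrow> real. (\<exists>i\<in>I. x i \<noteq> 0) \<longrightarrow>
         (\<Sum>i\<in>I. \<Sum>j\<in>I. x i * S i j * x j) > 0)"

definition factor_decomp_on ::
  "nat set \<Rightarrow> nat \<Rightarrow> (nat \<Rightarrow> nat \<Rightarrow> real) \<Rightarrow> (nat \<Rightarrow> real) \<Rightarrow> (nat \<Rightarrow> nat \<Rightarrow> real) \<Rightarrow> bool" where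
  "factor_decomp_on I m S d L \<longleftrightarrow>
     (\<forall>i\<in>I. d i > 0) \<and>
     (\<forall>i\<in>I. \<forall>j\<in>I. S i j = (if i = j then d i else 0) + (\<Sum>k<m. L i k * L j k))"

definition in_F_on :: "nat set \<Rightarrow> nat \<Rightarrow> (nat \<Rightarrow> nat \<Rightarrow> real) \<Rightarrow> bool" where
  "in_F_on I m S \<longleftrightarrow> (\<exists>d L. factor_decomp_on I m S d L)"

definition submat_of :: "(nat \<Rightarrow> nat \<Rightarrow> real) \<Rightarrow> nat set \<Rightarrow> nat set \<Rightarrow> real mat" where
  "submat_of S B C = mat (card B) (card C)
     (\<lambda>(a, b). S (sorted_list_of_set B ! a) (sorted_list_of_set C ! b))"

end

theory Submission
  imports Defs
begin

(* Write Sigma off the diagonal as Gram matrices of loading rows.  The two given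
   decompositions (on rows 1..p-1 and 2..p) share the rows 2..p-1, so their loadings
   glue to one loading L on 1..p; every entry of Sigma is then correct except the
   corner sigma_1p, which neither window sees.

   The corner is recovered from a third decomposition Delta' + H H^t of the principal
   submatrix omitting an index r in 2..p-1 outside B and C (it exists as p - 2 > 2m).
   The key algebraic fact: if X Y^t is nonsingular, u . v = (Y u) . (X Y^t)^{-1} (X v),
   so u . v is determined by X Y^t, Y u and X v.  Taking X, Y the loading rows on B, C
   and u, v the rows 1, p, these data are entries of Sigma, hence agree for L and H;
   thus sigma_1p = <H_1, H_p> = <L_1, L_p> and L gives a decomposition on 1..p. *)

lemma right_inverse_of_nonsingular:
  fixes A :: "'a :: field mat"
  assumes "A \<in> carrier_mat n n" and "det A \<noteq> 0"
  obtains N where "N \<in> carrier_mat n n" and "A * N = 1\<^sub>m n"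
  using det_non_zero_imp_unit[OF assms, of "()"] that
  unfolding Units_def ring_mat_def by auto

(* If N inverts X Y^t then Y^t N X = 1, hence u . v = (Y u) . (N (X v)). *)
lemma scalar_prod_through_inverse_gram:
  fixes X Y N :: "'a :: field mat"
  assumes X: "X \<in> carrier_mat n n" and Y: "Y \<in> carrier_mat n n" and N: "N \<in> carrier_mat n n"
    and inv: "X * transpose_mat Y * N = 1\<^sub>m n"
    and u: "u \<in> carrier_vec n" and v: "v \<in> carrier_vec n"
  shows "u \<bullet> v = (Y *\<^sub>v u) \<bullet> (N *\<^sub>v (X *\<^sub>v v))"
proof -
  have YtN: "transpose_mat Y * N \<in> carrier_mat n n" using Y N by simp
  have "X * (transpose_mat Y * N) = 1\<^sub>m n" using inv X Y N by simp
  then have left_inv: "transpose_mat Y * N * X = 1\<^sub>m n"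
    by (rule mat_mult_left_right_inverse[OF X YtN])
  have "(Y *\<^sub>v u) \<bullet> (N *\<^sub>v (X *\<^sub>v v)) = u \<bullet> (transpose_mat Y *\<^sub>v (N *\<^sub>v (X *\<^sub>v v)))"
    using transpose_vec_mult_scalar[of "transpose_mat Y" n n "N *\<^sub>v (X *\<^sub>v v)" u] Y N X u v
    by simp
  also have "transpose_mat Y *\<^sub>v (N *\<^sub>v (X *\<^sub>v v)) = (transpose_mat Y * N * X) *\<^sub>v v"
    using assoc_mult_mat_vec[of "transpose_mat Y * N" n n X n v]
      assoc_mult_mat_vec[of "transpose_mat Y" n n N n "X *\<^sub>v v"] X Y N v by simp
  finally show ?thesis using left_inv v by simp
qed

lemma scalar_prod_determined_by_gram:
  fixes X Y X' Y' :: "'a :: field mat"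
  assumes mats: "X \<in> carrier_mat n n" "Y \<in> carrier_mat n n" "X' \<in> carrier_mat n n" "Y' \<in> carrier_mat n n"
    and vecs: "u \<in> carrier_vec n" "v \<in> carrier_vec n" "u' \<in> carrier_vec n" "v' \<in> carrier_vec n"
    and gram: "X * transpose_mat Y = X' * transpose_mat Y'"
    and nonsing: "det (X * transpose_mat Y) \<noteq> 0"
    and left: "Y *\<^sub>v u = Y' *\<^sub>v u'" and right: "X *\<^sub>v v = X' *\<^sub>v v'"
  shows "u \<bullet> v = u' \<bullet> v'"
proof -
  have "X * transpose_mat Y \<in> carrier_mat n n" using mats by simp
  then obtain N where N: "N \<in> carrier_mat n n" and inv: "X * transpose_mat Y * N = 1\<^sub>m n"
    using right_inverse_of_nonsingular nonsing by blast
  have "u \<bullet> v = (Y *\<^sub>v u) \<bullet> (N *\<^sub>v (X *\<^sub>v v))"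
    using scalar_prod_through_inverse_gram[OF mats(1,2) N inv vecs(1,2)] .
  also have "\<dots> = (Y' *\<^sub>v u') \<bullet> (N *\<^sub>v (X' *\<^sub>v v'))" using left right by simp
  also have "\<dots> = u' \<bullet> v'"
    using scalar_prod_through_inverse_gram[OF mats(3,4) N _ vecs(3,4)] inv gram by simp
  finally show ?thesis .
qed

definition gram :: "nat \<Rightarrow> (nat \<Rightarrow> nat \<Rightarrow> real) \<Rightarrow> nat \<Rightarrow> nat \<Rightarrow> real" where
  "gram m L i j = (\<Sum>k<m. L i k * L j k)"

definition rows_mat :: "nat \<Rightarrow> (nat \<Rightarrow> nat \<Rightarrow> real) \<Rightarrow> nat set \<Rightarrow> real mat" where
  "rows_mat m L B = mat (card B) m (\<lambda>(a, k). L (sorted_list_of_set B ! a) k)"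

lemma scalar_prod_rows: "vec m (L i) \<bullet> vec m (L j) = gram m L i j"
  by (simp add: gram_def scalar_prod_def lessThan_atLeast0)

lemma rows_mat_carrier: "rows_mat m L B \<in> carrier_mat (card B) m"
  by (simp add: rows_mat_def)

lemma rows_mat_times_transpose:
  "rows_mat m L B * transpose_mat (rows_mat m L C) = submat_of (gram m L) B C"
  by (rule eq_matI) (auto simp: rows_mat_def submat_of_def gram_def scalar_prod_def lessThan_atLeast0)

lemma rows_mat_times_row:
  "rows_mat m L B *\<^sub>v vec m (L i) = vec (card B) (\<lambda>a. gram m L (sorted_list_of_set B ! a) i)"
  by (rule eq_vecI) (auto simp: rows_mat_def gram_def scalar_prod_def lessThan_atLeast0)

lemma nth_sorted_list_of_set_mem:
  assumes "finite B" and "a < card B"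
  shows "sorted_list_of_set B ! a \<in> B"
  using assms by (metis length_sorted_list_of_set nth_mem set_sorted_list_of_set)

lemma submat_of_cong:
  assumes "finite B" "finite C" "\<forall>x\<in>B. \<forall>y\<in>C. S x y = T x y"
  shows "submat_of S B C = submat_of T B C"
  using assms unfolding submat_of_def by (intro eq_matI) (auto simp: nth_sorted_list_of_set_mem)

lemma gram_entry_determined:
  fixes L H :: "nat \<Rightarrow> nat \<Rightarrow> real"
  assumes fin: "finite B" "finite C" and card: "card B = m" "card C = m"
    and on_BC: "\<forall>x\<in>B. \<forall>y\<in>C. gram m L x y = gram m H x y"
    and nonsing: "det (submat_of (gram m L) B C) \<noteq> 0"
    and on_Ca: "\<forall>y\<in>C. gram m L y a = gram m H y a"
    and on_Bb: "\<forall>x\<in>B. gram m L x b = gram m H x b"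
  shows "gram m L a b = gram m H a b"
proof -
  have mats: "rows_mat m L B \<in> carrier_mat m m" "rows_mat m L C \<in> carrier_mat m m"
    "rows_mat m H B \<in> carrier_mat m m" "rows_mat m H C \<in> carrier_mat m m"
    using rows_mat_carrier card by metis+
  have "vec m (L a) \<bullet> vec m (L b) = vec m (H a) \<bullet> vec m (H b)"
  proof (rule scalar_prod_determined_by_gram[OF mats])
    show "rows_mat m L B * transpose_mat (rows_mat m L C) = rows_mat m H B * transpose_mat (rows_mat m H C)"
      using submat_of_cong[OF fin on_BC] by (simp add: rows_mat_times_transpose)
    show "det (rows_mat m L B * transpose_mat (rows_mat m L C)) \<noteq> 0"
      using nonsing by (simp add: rows_mat_times_transpose)
    show "rows_mat m L C *\<^sub>v vec m (L a) = rows_mat m H C *\<^sub>v vec m (H a)"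
      using on_Ca fin card by (auto simp: rows_mat_times_row nth_sorted_list_of_set_mem)
    show "rows_mat m L B *\<^sub>v vec m (L b) = rows_mat m H B *\<^sub>v vec m (H b)"
      using on_Bb fin card by (auto simp: rows_mat_times_row nth_sorted_list_of_set_mem)
  qed auto
  then show ?thesis by (simp add: scalar_prod_rows)
qed

lemma factor_decomp_off_diag:
  assumes "factor_decomp_on I m S d L" and "i \<in> I" "j \<in> I" "i \<noteq> j"
  shows "S i j = gram m L i j"
  using assms unfolding factor_decomp_on_def gram_def by auto

lemma factor_decomp_cong_loading:
  assumes "factor_decomp_on I m S d L" and "\<forall>i\<in>I. \<forall>k<m. L i k = L' i k"
  shows "factor_decomp_on I m S d L'"
  using assms unfolding factor_decomp_on_def by simp

lemma cross_entry_via_third_decomposition: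
  assumes dI: "factor_decomp_on I m S d1 L" and dJ: "factor_decomp_on J m S d2 L"
    and dK: "factor_decomp_on K m S e H"
    and BC: "B \<subseteq> I \<inter> J \<inter> K" "C \<subseteq> I \<inter> J \<inter> K" "B \<inter> C = {}" "finite B" "finite C"
      "card B = m" "card C = m" "det (submat_of S B C) \<noteq> 0"
    and a: "a \<in> I \<inter> K" "a \<notin> C" and b: "b \<in> J \<inter> K" "b \<notin> B" and "a \<noteq> b"
  shows "S a b = gram m L a b"
proof -
  have L_BC: "S x y = gram m L x y" and H_BC: "S x y = gram m H x y" if "x \<in> B" "y \<in> C" for x y
    using BC dI dK that by (auto intro!: factor_decomp_off_diag)
  have "gram m L a b = gram m H a b"
  proof (rule gram_entry_determined[OF BC(4-7)])
    show "\<forall>x\<in>B. \<forall>y\<in>C. gram m L x y = gram m H x y"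
      using L_BC H_BC by auto
    have "submat_of (gram m L) B C = submat_of S B C"
      by (rule submat_of_cong[OF BC(4,5)]) (simp add: L_BC)
    then show "det (submat_of (gram m L) B C) \<noteq> 0" using BC(8) by simp
    show "\<forall>y\<in>C. gram m L y a = gram m H y a"
    proof
      fix y assume "y \<in> C"
      then have "y \<in> I" "y \<in> K" "y \<noteq> a" using BC(2) a by auto
      then show "gram m L y a = gram m H y a"
        using factor_decomp_off_diag[OF dI, of y a] factor_decomp_off_diag[OF dK, of y a] a by simp
    qed
    show "\<forall>x\<in>B. gram m L x b = gram m H x b"
    proof
      fix x assume "x \<in> B"
      then have "x \<in> J" "x \<in> K" "x \<noteq> b" using BC(1) b by auto
      then show "gram m L x b = gram m H x b"
        using factor_decomp_off_diag[OF dJ, of x b] factor_decomp_off_diag[OF dK, of x b] b by simp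
    qed
  qed
  also have "\<dots> = S a b" using a b dK \<open>a \<noteq> b\<close> by (simp add: factor_decomp_off_diag)
  finally show ?thesis by simp
qed

lemma factor_decomp_glue:
  assumes dI: "factor_decomp_on I m S d1 L" and dJ: "factor_decomp_on J m S d2 L"
    and sym: "\<forall>i\<in>I \<union> J. \<forall>j\<in>I \<union> J. S i j = S j i"
    and cross: "\<forall>i\<in>I - J. \<forall>j\<in>J - I. S i j = gram m L i j"
  shows "factor_decomp_on (I \<union> J) m S (\<lambda>i. if i \<in> I then d1 i else d2 i) L"
proof -
  have mixed: "S i j = gram m L i j" if "i \<in> I" "j \<in> J - I" for i j
  proof (cases "i \<in> J")
    case True
    then show ?thesis using that factor_decomp_off_diag[OF dJ, of i j] by auto
  next
    case False
    then show ?thesis using that cross by auto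
  qed
  have entry: "S i j = (if i = j then (if i \<in> I then d1 i else d2 i) else 0) + gram m L i j"
    if ij: "i \<in> I \<union> J" "j \<in> I \<union> J" for i j
  proof -
    consider "i \<in> I" "j \<in> I" | "i \<in> J" "j \<in> J" "i \<notin> I \<or> j \<notin> I"
      | "i \<in> I" "j \<in> J - I" | "j \<in> I" "i \<in> J - I"
      using ij by blast
    then show ?thesis
    proof cases
      case 1
      then show ?thesis using dI unfolding factor_decomp_on_def gram_def by simp
    next
      case 2
      then show ?thesis using dJ unfolding factor_decomp_on_def gram_def by auto
    next
      case 3
      then show ?thesis using mixed by auto
    next
      case 4
      then have "S i j = gram m L j i" using mixed sym ij by metis
      then show ?thesis using 4 by (auto simp: gram_def mult.commute)
    qed
  qed
  show ?thesis
    using dI dJ entry unfolding factor_decomp_on_def gram_def by auto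
qed

lemma in_F_from_overlapping_windows:
  assumes p: "p \<ge> 2" and sym: "\<forall>i\<in>{1..p}. \<forall>j\<in>{1..p}. S i j = S j i"
    and dI: "factor_decomp_on {1..p-1} m S d1 L" and dJ: "factor_decomp_on {2..p} m S d2 L"
    and cross: "S 1 p = gram m L 1 p"
  shows "in_F_on {1..p} m S"
proof -
  have cover: "{1..p-1} \<union> {2..p} = {1..p}"
    and ends: "{1..p-1} - {2..p} = {1}" "{2..p} - {1..p-1} = {p}"
    using p by auto
  have "factor_decomp_on ({1..p-1} \<union> {2..p}) m S (\<lambda>i. if i \<in> {1..p-1} then d1 i else d2 i) L"
  proof (rule factor_decomp_glue[OF dI dJ])
    show "\<forall>i\<in>{1..p-1} \<union> {2..p}. \<forall>j\<in>{1..p-1} \<union> {2..p}. S i j = S j i"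
      using sym unfolding cover .
    show "\<forall>i\<in>{1..p-1} - {2..p}. \<forall>j\<in>{2..p} - {1..p-1}. S i j = gram m L i j"
      using cross unfolding ends by simp
  qed
  then show ?thesis unfolding cover in_F_on_def by blast
qed

lemma exists_index_outside:
  assumes "finite X" and "card X < card A"
  obtains r where "r \<in> A" and "r \<notin> X"
  using assms card_mono[of X A] by (meson not_le subsetI)

theorem lemma2:
  fixes m p :: nat
    and Sigma :: "nat \<Rightarrow> nat \<Rightarrow> real"
    and delta d :: "nat \<Rightarrow> real"
    and Gamma G :: "nat \<Rightarrow> nat \<Rightarrow> real"
  assumes "m \<ge> 1"
    and "p \<ge> 2 * m + 3"
    and "pos_def_on {1..p} Sigma"
    and "\<forall>i\<in>{1..p}. in_F_on ({1..p} - {i}) m Sigma"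
    and "factor_decomp_on {1..p-1} m Sigma delta Gamma"
    and "factor_decomp_on {2..p} m Sigma d G"
    and "\<forall>i\<in>{2..p-1}. \<forall>k<m. Gamma i k = G i k"
    and "\<exists>B C. B \<subseteq> {2..p-1} \<and> C \<subseteq> {2..p-1} \<and> B \<inter> C = {} \<and>
               card B = m \<and> card C = m \<and> det (submat_of Sigma B C) \<noteq> 0"
  shows "in_F_on {1..p} m Sigma"
proof -
  obtain B C where BC: "B \<subseteq> {2..p-1}" "C \<subseteq> {2..p-1}" "B \<inter> C = {}" "card B = m" "card C = m"
    "det (submat_of Sigma B C) \<noteq> 0" using assms(8) by blast
  have fin: "finite B" "finite C" using BC(1,2) finite_subset by blast+
  have "card (B \<union> C) < card {2..p-1}" using card_Un_le[of B C] BC assms(2) by simp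
  then obtain r where r: "r \<in> {2..p-1}" "r \<notin> B \<union> C"
    using exists_index_outside fin by blast
  \<comment> \<open>the principal submatrix omitting r contains rows 1, p and the block B x C\<close>
  have "r \<in> {1..p}" using r by auto
  then obtain e H where dK: "factor_decomp_on ({1..p} - {r}) m Sigma e H"
    using assms(4) unfolding in_F_on_def by blast
  define L where "L i = (if i \<in> {1..p-1} then Gamma i else G i)" for i
  have dI: "factor_decomp_on {1..p-1} m Sigma delta L"
    using assms(5) by (rule factor_decomp_cong_loading) (simp add: L_def)
  have dJ: "factor_decomp_on {2..p} m Sigma d L"
    using assms(6) by (rule factor_decomp_cong_loading) (use assms(7) in \<open>auto simp: L_def\<close>)
  have middle: "B \<subseteq> {1..p-1} \<inter> {2..p} \<inter> ({1..p} - {r})" "C \<subseteq> {1..p-1} \<inter> {2..p} \<inter> ({1..p} - {r})"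
    using BC(1,2) r(2) by (auto simp: subset_iff)
  have cross: "Sigma 1 p = gram m L 1 p"
    by (rule cross_entry_via_third_decomposition[OF dI dJ dK middle BC(3) fin BC(4-6)])
      (use BC(1,2) r assms(2) in auto)
  show ?thesis
    using in_F_from_overlapping_windows[OF _ _ dI dJ cross] assms(2,3)
    unfolding pos_def_on_def by auto
qed

end
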